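(* Let $n\in\omega$ and let $\mathcal{F}$ be a fully $\Delta$-capturing construction scheme of type $\langle m_k,n_{k+1},r_{k+1}\rangle_{k\in\omega}$ with $n_{k+1}\geq 2^{m_k}$ for all $k$. With $e_\alpha$ defined as in the context, the set $\mathbb{E}_e=\{e_\alpha:\alpha\in\omega_1\}\subseteq\mathbb{Z}^\omega$, ordered lexicographically, is $2n$-entangled.
   Context: Construction schemes: a type is a sequence $\langle m_k,n_{k+1},r_{k+1}\rangle_{k\in\omega}$ with $m_0=1$, $n_{k+1}\geq2$, $m_k>r_{k+1}$, $m_{k+1}=r_{k+1}+(m_k-r_{k+1})n_{k+1}$. A construction scheme of this type is a family $\mathcal{F}$ of nonempty finite subsets of $\omega_1$, cofinal under $\subseteq$, each member of size $m_k$ for some $k$, such that with $\mathcal{F}_k=\{F\in\mathcal{F}:|F|=m_k\}$: (i) for $E,F\in\mathcal{F}_k$, $E\cap F$ is an initial segment of $E$ and of $F$; (ii) each $F\in\mathcal{F}_{k+1}$ is $F_0\cup\dots\cup F_{n_{k+1}-1}$ with $F_i\in\mathcal{F}_k$ a $\Delta$-system with root $R(F)$, $|R(F)|=r_{k+1}$, $R(F)<F_0\setminus R(F)<\dots<F_{n_{k+1}-1}\setminus R(F)$. Let $\rho(\alpha,\beta)=\min\{k:\exists F\in\mathcal{F}_k\ \{\alpha,\beta\}\subseteq F\}$, $\|\alpha\|_k=|\{\xi<\alpha:\rho(\alpha,\xi)\leq k\}|$, $\Delta(\alpha,\beta)=$ least $k$ with $\|\alpha\|_k\ne\|\beta\|_k$.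 $\Xi_\alpha(0)=0$ and for $k\geq1$, for any $F\in\mathcal{F}_k$ containing $\alpha$, $\Xi_\alpha(k)=-1$ if $\alpha\in R(F)$, $=i$ if $\alpha\in F_i\setminus R(F)$. For finite $X\subseteq\omega_1$, $X(i)$ is its $i$-th element. $\langle D_j\rangle_{j<N}\subseteq[\omega_1]^m$ ($N\geq2$) is $\Delta$-captured at level $l$ if it is a $\Delta$-system with root $R$ of size $r$, $R<D_j\setminus R$, tails pairwise $<$-comparable, $\Xi_{D_j(a)}(l)=-1$ for $a<r$ and $=j$ for $a\geq r$, and $\Delta(D_i(a),D_j(a))=l$ for $i\neq j$, $r\leq a<m$. $\mathcal{F}$ is fully $\Delta$-capturing if for every uncountable family $\mathcal{S}$ of finite subsets of $\omega_1$ there are infinitely many $l$ such that some $n_l$ members of $\mathcal{S}$ can be enumerated as a family $\Delta$-captured at level $l$. The functions: for each $k$, let $\langle C^k_i\rangle_{0<i<n_{k+1}}$ enumerate (possibly with repetitions) the set $[m_k\setminus r_{k+1}]^{\leq n}$ of subsets of $m_k\setminus r_{k+1}$ of size at most $n$. For $\alpha<\omega_1$ define $e_\alpha:\omega\to\mathbb{Z}$ by: $e_\alpha(k)=0$ if $\Xi_\alpha(k)\leq0$; $e_\alpha(k)=\Xi_\alpha(k)$ if $\Xi_\alpha(k)>0$ and $\|\alpha\|_{k-1}\in C^{k-1}_{\Xi_\alpha(k)}$; $e_\alpha(k)=\Xi_\alpha(k)$ if $\Xi_\alpha(k)>0$, $|C^{k-1}_{\Xi_\alpha(k)}|=n$ and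 $\|\alpha\|_{k-1}<\min C^{k-1}_{\Xi_\alpha(k)}$; $e_\alpha(k)=-\Xi_\alpha(k)$ otherwise. $\mathbb{Z}^\omega$ is ordered by $f<_{lex}g$ iff $f(k)<g(k)$ for the least $k$ with $f(k)\neq g(k)$. For a linear order, an uncountable subset $\mathbb{E}$ is $k$-entangled if for every $\tau:k\to2$ and every uncountable family $\mathcal{A}\subseteq[\mathbb{E}]^k$ of pairwise disjoint sets there are distinct $a,b\in\mathcal{A}$ with $a(i)<b(i)\iff\tau(i)=0$ for all $i<k$. *)

theory Defs
  imports Main "HOL-Library.Countable_Set"
begin

text \<open>omega_1 is represented by a well-ordered type 'a that is uncountable and all of whose
proper initial segments are countable (assumptions of the main theorem).\<close>

definition is_type :: "(nat \<Rightarrow> nat) \<Rightarrow> (nat \<Rightarrow> nat) \<Rightarrow> (nat \<Rightarrow> nat) \<Rightarrow> bool" where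
  "is_type m nseq r \<longleftrightarrow> m 0 = 1 \<and>
     (\<forall>k. nseq (Suc k) \<ge> 2 \<and> m k > r (Suc k) \<and>
          m (Suc k) = r (Suc k) + (m k - r (Suc k)) * nseq (Suc k))"

definition Lev :: "(nat \<Rightarrow> nat) \<Rightarrow> 'a set set \<Rightarrow> nat \<Rightarrow> 'a set set" where
  "Lev m \<F> k = {F \<in> \<F>. card F = m k}"

definition decomp :: "nat \<Rightarrow> nat \<Rightarrow> 'a::linorder set set \<Rightarrow> 'a set \<Rightarrow> (nat \<Rightarrow> 'a set) \<Rightarrow> 'a set \<Rightarrow> bool" where
  "decomp N rr Lk F Fs R \<longleftrightarrow>
     F = (\<Union>i<N. Fs i) \<and> (\<forall>i<N. Fs i \<in> Lk) \<and>
     (\<forall>i<N. \<forall>j<N. i \<noteq> j \<longrightarrow> Fs i \<inter> Fs j = R) \<and> card R = rr \<and>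
     (\<forall>i<N. \<forall>x\<in>R. \<forall>y\<in>Fs i - R. x < y) \<and>
     (\<forall>i j. i < j \<longrightarrow> j < N \<longrightarrow> (\<forall>x\<in>Fs i - R. \<forall>y\<in>Fs j - R. x < y))"

definition construction_scheme ::
  "(nat \<Rightarrow> nat) \<Rightarrow> (nat \<Rightarrow> nat) \<Rightarrow> (nat \<Rightarrow> nat) \<Rightarrow> 'a::linorder set set \<Rightarrow> bool" where
  "construction_scheme m nseq r \<F> \<longleftrightarrow>
     is_type m nseq r \<and>
     (\<forall>F\<in>\<F>. finite F \<and> F \<noteq> {} \<and> (\<exists>k. card F = m k)) \<and>
     (\<forall>A. finite A \<longrightarrow> (\<exists>F\<in>\<F>. A \<subseteq> F)) \<and>
     (\<forall>k. \<forall>E\<in>Lev m \<F> k. \<forall>F\<in>Lev m \<F> k.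
          (\<forall>x\<in>E \<inter> F. \<forall>y\<in>E. y < x \<longrightarrow> y \<in> F) \<and>
          (\<forall>x\<in>E \<inter> F. \<forall>y\<in>F. y < x \<longrightarrow> y \<in> E)) \<and>
     (\<forall>k. \<forall>F\<in>Lev m \<F> (Suc k). \<exists>Fs R. decomp (nseq (Suc k)) (r (Suc k)) (Lev m \<F> k) F Fs R)"

definition rho :: "(nat \<Rightarrow> nat) \<Rightarrow> 'a set set \<Rightarrow> 'a \<Rightarrow> 'a \<Rightarrow> nat" where
  "rho m \<F> \<alpha> \<beta> = (LEAST k. \<exists>F\<in>Lev m \<F> k. \<alpha> \<in> F \<and> \<beta> \<in> F)"

definition norm_at :: "(nat \<Rightarrow> nat) \<Rightarrow> 'a::linorder set set \<Rightarrow> 'a \<Rightarrow> nat \<Rightarrow> nat" where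
  "norm_at m \<F> \<alpha> k = card {\<xi>. \<xi> < \<alpha> \<and> rho m \<F> \<alpha> \<xi> \<le> k}"

definition Delta :: "(nat \<Rightarrow> nat) \<Rightarrow> 'a::linorder set set \<Rightarrow> 'a \<Rightarrow> 'a \<Rightarrow> nat" where
  "Delta m \<F> \<alpha> \<beta> = (LEAST k. norm_at m \<F> \<alpha> k \<noteq> norm_at m \<F> \<beta> k)"

definition Xi :: "(nat \<Rightarrow> nat) \<Rightarrow> (nat \<Rightarrow> nat) \<Rightarrow> (nat \<Rightarrow> nat) \<Rightarrow> 'a::linorder set set \<Rightarrow> 'a \<Rightarrow> nat \<Rightarrow> int" where
  "Xi m nseq r \<F> \<alpha> k =
     (if k = 0 then 0 else
      (THE v. \<exists>F\<in>Lev m \<F> k. \<alpha> \<in> F \<and>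
         (\<exists>Fs R. decomp (nseq k) (r k) (Lev m \<F> (k - 1)) F Fs R \<and>
            ((\<alpha> \<in> R \<and> v = -1) \<or> (\<exists>i<nseq k. \<alpha> \<in> Fs i - R \<and> v = int i)))))"

text \<open>The i-th element (counting from 0) of a finite set X with respect to the strict order lt.\<close>
definition elem_at :: "('b \<Rightarrow> 'b \<Rightarrow> bool) \<Rightarrow> 'b set \<Rightarrow> nat \<Rightarrow> 'b" where
  "elem_at lt X i = (THE x. x \<in> X \<and> card {y \<in> X. lt y x} = i)"

definition captured ::
  "(nat \<Rightarrow> nat) \<Rightarrow> (nat \<Rightarrow> nat) \<Rightarrow> (nat \<Rightarrow> nat) \<Rightarrow> 'a::linorder set set \<Rightarrow> nat \<Rightarrow> nat \<Rightarrow> (nat \<Rightarrow> 'a set) \<Rightarrow> bool" where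
  "captured m nseq r \<F> l N D \<longleftrightarrow> 2 \<le> N \<and>
     (\<exists>mm R.
        (\<forall>j<N. finite (D j) \<and> card (D j) = mm) \<and>
        (\<forall>i<N. \<forall>j<N. i \<noteq> j \<longrightarrow> D i \<inter> D j = R) \<and>
        (\<forall>j<N. \<forall>x\<in>R. \<forall>y\<in>D j - R. x < y) \<and>
        (\<forall>i<N. \<forall>j<N. i \<noteq> j \<longrightarrow>
            (\<forall>x\<in>D i - R. \<forall>y\<in>D j - R. x < y) \<or> (\<forall>x\<in>D j - R. \<forall>y\<in>D i - R. x < y)) \<and>
        (\<forall>j<N. \<forall>a<card R. Xi m nseq r \<F> (elem_at (<) (D j) a) l = -1) \<and>
        (\<forall>j<N. \<forall>a. card R \<le> a \<and> a < mm \<longrightarrow> Xi m nseq r \<F> (elem_at (<) (D j) a) l = int j) \<and>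
        (\<forall>i<N. \<forall>j<N. i \<noteq> j \<longrightarrow> (\<forall>a. card R \<le> a \<and> a < mm \<longrightarrow>
            Delta m \<F> (elem_at (<) (D i) a) (elem_at (<) (D j) a) = l)))"

definition fully_Delta_capturing ::
  "(nat \<Rightarrow> nat) \<Rightarrow> (nat \<Rightarrow> nat) \<Rightarrow> (nat \<Rightarrow> nat) \<Rightarrow> 'a::linorder set set \<Rightarrow> bool" where
  "fully_Delta_capturing m nseq r \<F> \<longleftrightarrow>
     (\<forall>\<S>. \<S> \<subseteq> {A. finite A} \<and> \<not> countable \<S> \<longrightarrow>
        infinite {l. 0 < l \<and> (\<exists>D. (\<forall>j<nseq l. D j \<in> \<S>) \<and> inj_on D {..<nseq l} \<and>
                                  captured m nseq r \<F> l (nseq l) D)})"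

definition e_fun ::
  "(nat \<Rightarrow> nat) \<Rightarrow> (nat \<Rightarrow> nat) \<Rightarrow> (nat \<Rightarrow> nat) \<Rightarrow> 'a::linorder set set \<Rightarrow> (nat \<Rightarrow> nat \<Rightarrow> nat set) \<Rightarrow> nat \<Rightarrow> 'a \<Rightarrow> nat \<Rightarrow> int" where
  "e_fun m nseq r \<F> C n \<alpha> k =
     (let x = Xi m nseq r \<F> \<alpha> k; c = C (k - 1) (nat x); a = norm_at m \<F> \<alpha> (k - 1) in
      if x \<le> 0 then 0
      else if a \<in> c then x
      else if card c = n \<and> a < Min c then x
      else - x)"

definition lex_less :: "(nat \<Rightarrow> int) \<Rightarrow> (nat \<Rightarrow> int) \<Rightarrow> bool" where
  "lex_less f g \<longleftrightarrow> (\<exists>k. (\<forall>j<k. f j = g j) \<and> f k < g k)"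

definition entangled :: "('b \<Rightarrow> 'b \<Rightarrow> bool) \<Rightarrow> nat \<Rightarrow> 'b set \<Rightarrow> bool" where
  "entangled lt k E \<longleftrightarrow> \<not> countable E \<and>
     (\<forall>\<tau>::nat \<Rightarrow> nat. (\<forall>i<k. \<tau> i < 2) \<longrightarrow>
       (\<forall>\<A>. \<A> \<subseteq> {a. a \<subseteq> E \<and> finite a \<and> card a = k} \<and> \<not> countable \<A> \<and>
             (\<forall>a\<in>\<A>. \<forall>b\<in>\<A>. a \<noteq> b \<longrightarrow> a \<inter> b = {}) \<longrightarrow>
          (\<exists>a\<in>\<A>. \<exists>b\<in>\<A>. a \<noteq> b \<and>
             (\<forall>i<k. lt (elem_at lt a i) (elem_at lt b i) \<longleftrightarrow> \<tau> i = 0))))"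

end

theory Submission
  imports Defs "HOL-Library.Fun_Lexorder"
begin

text \<open>Given uncountably many pairwise disjoint \<open>2n\<close>-element subsets of \<open>E_e\<close>, pull them back to
  pairwise disjoint \<open>2n\<close>-element subsets of \<open>\<omega>\<^sub>1\<close> and shrink to an uncountable subfamily on which,
  for one fixed \<open>K\<close>, distinct points of a set are already separated by \<open>e\<close> below \<open>K\<close> and every set
  lies in a member of \<open>F_K\<close>. Capture \<open>n_l\<close> of these sets \<open>D_0, D_1, \<dots>\<close> at a level \<open>l > K\<close>.
  Corresponding points of the \<open>D_j\<close> have equal norms below \<open>l\<close>, so their \<open>e\<close>-values agree below
  \<open>l\<close> and every \<open>e ` D_j\<close> is lexicographically ordered like \<open>e ` D_0\<close>. At level \<open>l\<close> the points
  of \<open>D_j\<close> have \<open>\<Xi> = j\<close>, so \<open>e\<close> is \<open>0\<close> there on \<open>D_0\<close> and \<open>\<plusminus>j\<close> on \<open>D_j\<close>, the sign depending only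
  on the common norm at level \<open>l - 1\<close>. Split these \<open>2n\<close> norms according to the colour \<open>\<tau>\<close> of
  the lexicographic position: one side has at most \<open>n\<close> elements, and contains the least norm if
  it has exactly \<open>n\<close>. That side is \<open>C^{l-1}_j\<close> for some \<open>j\<close>, and comparing \<open>D_0\<close> with \<open>D_j\<close>
  (or \<open>D_j\<close> with \<open>D_0\<close>) realizes \<open>\<tau>\<close>.\<close>

lemma lex_less_eq_less_fun: "lex_less = less_fun"
  by (auto simp: fun_eq_iff lex_less_def less_fun_def)

lemma first_difference:
  fixes f g :: "nat \<Rightarrow> 'b"
  assumes "f j \<noteq> g j"
  obtains k where "k \<le> j" "\<forall>i<k. f i = g i" "f k \<noteq> g k"
proof -
  define k where "k = (LEAST k. f k \<noteq> g k)"
  have "f k \<noteq> g k"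
    unfolding k_def by (rule LeastI[of _ j]) (rule assms)
  moreover have "k \<le> j"
    unfolding k_def by (rule Least_le) (rule assms)
  moreover have "\<forall>i<k. f i = g i"
    unfolding k_def using not_less_Least by blast
  ultimately show thesis using that by blast
qed

lemma lex_less_iff_at_first_difference:
  assumes "\<forall>i<k. f i = g i" "f k \<noteq> g k"
  shows "lex_less f g \<longleftrightarrow> f k < g k"
proof
  assume "lex_less f g"
  then obtain k' where k': "\<forall>i<k'. f i = g i" "f k' < g k'"
    unfolding lex_less_def by blast
  with assms have "k' = k"
    by (metis less_irrefl linorder_neqE_nat)
  with k' show "f k < g k" by simp
qed (use assms in \<open>auto simp: lex_less_def\<close>)

lemma lex_less_total: "f \<noteq> g \<Longrightarrow> lex_less f g \<or> lex_less g f"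
proof -
  assume "f \<noteq> g"
  then obtain j where "f j \<noteq> g j" by auto
  then obtain k where "\<forall>i<k. f i = g i" "f k \<noteq> g k" by (rule first_difference)
  then show ?thesis
    using lex_less_iff_at_first_difference[of k f g] lex_less_iff_at_first_difference[of k g f]
    by fastforce
qed

lemma lex_less_cong_prefix:
  assumes "\<forall>i<l. f i = f' i" "\<forall>i<l. g i = g' i" "\<exists>i<l. f i \<noteq> g i"
  shows "lex_less f g \<longleftrightarrow> lex_less f' g'"
proof -
  obtain j where "j < l" "f j \<noteq> g j" using assms(3) by blast
  then obtain k where "k < l" "\<forall>i<k. f i = g i" "f k \<noteq> g k"
    by (metis first_difference le_less_trans)
  with assms(1,2) show ?thesis
    using lex_less_iff_at_first_difference[of k f g] lex_less_iff_at_first_difference[of k f' g']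
    by simp
qed

locale strict_linorder =
  fixes less :: "'b \<Rightarrow> 'b \<Rightarrow> bool" (infix "\<prec>" 50)
  assumes irrefl: "\<not> x \<prec> x"
    and trans: "x \<prec> y \<Longrightarrow> y \<prec> z \<Longrightarrow> x \<prec> z"
    and total: "x \<noteq> y \<Longrightarrow> x \<prec> y \<or> y \<prec> x"
begin

lemma card_less_strict_mono:
  assumes "finite X" "x \<in> X" "y \<in> X" "x \<prec> y"
  shows "card {z\<in>X. z \<prec> x} < card {z\<in>X. z \<prec> y}"
proof (rule psubset_card_mono)
  show "{z\<in>X. z \<prec> x} \<subset> {z\<in>X. z \<prec> y}"
    using assms irrefl trans by blast
qed (use assms in simp)

lemma bij_betw_rank:
  assumes "finite X"
  shows "bij_betw (\<lambda>x. card {z\<in>X. z \<prec> x}) X {..<card X}"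
proof -
  let ?rank = "\<lambda>x. card {z\<in>X. z \<prec> x}"
  have "inj_on ?rank X"
  proof (rule inj_onI, rule ccontr)
    fix x y assume "x \<in> X" "y \<in> X" "?rank x = ?rank y" "x \<noteq> y"
    then show False
      using total[of x y] card_less_strict_mono[OF assms, of x y]
        card_less_strict_mono[OF assms, of y x]
      by auto
  qed
  moreover have "?rank ` X \<subseteq> {..<card X}"
    using assms irrefl by (auto intro!: psubset_card_mono)
  ultimately show ?thesis
    by (simp add: bij_betw_def card_image card_subset_eq)
qed

lemma elem_at_rank:
  assumes "finite X" "x \<in> X"
  shows "elem_at (\<prec>) X (card {z\<in>X. z \<prec> x}) = x"
  unfolding elem_at_def
proof (rule the_equality)
  show "x \<in> X \<and> card {z\<in>X. z \<prec> x} = card {z\<in>X. z \<prec> x}"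
    using assms(2) by simp
  show "y = x" if "y \<in> X \<and> card {z\<in>X. z \<prec> y} = card {z\<in>X. z \<prec> x}" for y
    using that assms(2) inj_onD[OF bij_betw_imp_inj_on[OF bij_betw_rank[OF assms(1)]]] by blast
qed

lemma elem_at_singleton: "elem_at (\<prec>) {x} 0 = x"
proof -
  have none_below: "{z\<in>{x}. z \<prec> x} = {}" using irrefl by auto
  show ?thesis
    using elem_at_rank[of "{x}" x] unfolding none_below by simp
qed

lemma bij_betw_elem_at:
  assumes "finite X"
  shows "bij_betw (elem_at (\<prec>) X) {..<card X} X"
proof -
  let ?rank = "\<lambda>x. card {z\<in>X. z \<prec> x}"
  have "elem_at (\<prec>) X p \<in> X \<and> ?rank (elem_at (\<prec>) X p) = p" if "p < card X" for p
  proof -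
    have "p \<in> ?rank ` X"
      using that bij_betw_imp_surj_on[OF bij_betw_rank[OF assms]] by simp
    then obtain x where "x \<in> X" "p = ?rank x" by blast
    then show ?thesis using elem_at_rank[OF assms \<open>x \<in> X\<close>] by simp
  qed
  then show ?thesis
    using elem_at_rank[OF assms] bij_betw_rank[OF assms]
    by (intro bij_betw_byWitness[where f' = ?rank]) (auto simp: bij_betw_def)
qed

lemma elem_at_image_rank:
  assumes "finite I" "inj_on f I" "a \<in> I"
  shows "elem_at (\<prec>) (f ` I) (card {b\<in>I. f b \<prec> f a}) = f a"
proof -
  have "{z\<in>f ` I. z \<prec> f a} = f ` {b\<in>I. f b \<prec> f a}" by blast
  then have "card {z\<in>f ` I. z \<prec> f a} = card {b\<in>I. f b \<prec> f a}"
    using assms(2) by (simp add: card_image inj_on_subset)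
  then show ?thesis
    using elem_at_rank[of "f ` I" "f a"] assms by simp
qed

lemma bij_betw_image_rank:
  assumes "finite I" "inj_on f I"
  shows "bij_betw (\<lambda>a. card {b\<in>I. f b \<prec> f a}) I {..<card I}"
proof -
  have "bij_betw f I (f ` I)"
    using assms(2) by (rule bij_betw_imageI) simp
  moreover have "bij_betw (\<lambda>x. card {z\<in>f ` I. z \<prec> x}) (f ` I) {..<card I}"
    using bij_betw_rank[of "f ` I"] assms by (simp add: card_image)
  ultimately have "bij_betw ((\<lambda>x. card {z\<in>f ` I. z \<prec> x}) \<circ> f) I {..<card I}"
    by (rule bij_betw_trans)
  moreover have "card {z\<in>f ` I. z \<prec> f a} = card {b\<in>I. f b \<prec> f a}" if "a \<in> I" for a
  proof -
    have "{z\<in>f ` I. z \<prec> f a} = f ` {b\<in>I. f b \<prec> f a}" by blast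
    then show ?thesis using assms(2) by (simp add: card_image inj_on_subset)
  qed
  ultimately show ?thesis
    by (simp cong: bij_betw_cong)
qed

end

interpretation lex: strict_linorder lex_less
proof
  show "\<not> lex_less f f" for f
    by (simp add: lex_less_eq_less_fun less_fun_irrefl)
  show "lex_less f h" if "lex_less f g" "lex_less g h" for f g h
    using that by (simp add: lex_less_eq_less_fun less_fun_trans)
qed (rule lex_less_total)

interpretation less: strict_linorder "(<) :: 'a::linorder \<Rightarrow> 'a \<Rightarrow> bool"
  by unfold_locales auto

lemma elem_at_lex_image_agree_below:
  fixes g h :: "'i \<Rightarrow> nat \<Rightarrow> int"
  assumes "finite I"
    and agree: "\<And>a k. a \<in> I \<Longrightarrow> k < l \<Longrightarrow> h a k = g a k"
    and sep: "\<And>a b. a \<in> I \<Longrightarrow> b \<in> I \<Longrightarrow> a \<noteq> b \<Longrightarrow> \<exists>k<l. g a k \<noteq> g b k"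
    and "a \<in> I"
  shows "elem_at lex_less (h ` I) (card {b\<in>I. lex_less (g b) (g a)}) = h a"
proof -
  have inj: "inj_on h I"
    by (rule inj_onI) (metis agree sep)
  have "{b\<in>I. lex_less (h b) (h a)} = {b\<in>I. lex_less (g b) (g a)}"
  proof (intro Collect_cong conj_cong refl)
    fix b assume "b \<in> I"
    show "lex_less (h b) (h a) \<longleftrightarrow> lex_less (g b) (g a)"
    proof (cases "b = a")
      case False
      then show ?thesis
        using lex_less_cong_prefix[of l "g b" "h b" "g a" "h a"] sep[OF \<open>b \<in> I\<close> \<open>a \<in> I\<close>]
          agree \<open>b \<in> I\<close> \<open>a \<in> I\<close> by simp
    qed (simp add: lex.irrefl)
  qed
  then show ?thesis
    using lex.elem_at_image_rank[OF \<open>finite I\<close> inj \<open>a \<in> I\<close>] by simp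
qed

lemma uncountable_subfamily_common_index:
  fixes P :: "'b \<Rightarrow> nat \<Rightarrow> bool"
  assumes "\<not> countable S" "\<And>X. X \<in> S \<Longrightarrow> \<exists>k. P X k"
  shows "\<exists>K. \<not> countable {X\<in>S. P X K}"
proof (rule ccontr)
  assume "\<nexists>K. \<not> countable {X\<in>S. P X K}"
  then have "countable (\<Union>K. {X\<in>S. P X K})" by auto
  moreover have "S \<subseteq> (\<Union>K. {X\<in>S. P X K})" using assms(2) by blast
  ultimately show False using assms(1) countable_subset by blast
qed

lemma preimage_family:
  fixes f :: "'a \<Rightarrow> 'b"
  assumes "\<And>a. a \<in> \<A> \<Longrightarrow> a \<subseteq> range f"
  obtains S where "bij_betw (image f) S \<A>" "\<And>X. X \<in> S \<Longrightarrow> inj_on f X"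
proof
  have f_inv: "f ` inv f ` a = a" if "a \<in> \<A>" for a
    using assms[OF that] by (rule image_inv_into_cancel[of f UNIV, OF refl])
  show "bij_betw (image f) ((\<lambda>a. inv f ` a) ` \<A>) \<A>"
    by (rule bij_betw_byWitness[where f' = "\<lambda>a. inv f ` a"]) (auto simp: f_inv)
  show "inj_on f X" if X: "X \<in> (\<lambda>a. inv f ` a) ` \<A>" for X
  proof -
    obtain a where a: "a \<in> \<A>" "X = inv f ` a" using X by blast
    have "inv f (f x) = x" if "x \<in> X" for x
      using that a assms[OF a(1)] by (auto simp: f_inv_into_f subset_iff)
    then show ?thesis by (rule inj_on_inverseI)
  qed
qed

lemma finite_functions_separated_below:
  fixes A :: "(nat \<Rightarrow> 'b) set"
  assumes "finite A"
  shows "\<exists>K. \<forall>f\<in>A. \<forall>g\<in>A. f \<noteq> g \<longrightarrow> (\<exists>k<K. f k \<noteq> g k)"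
proof -
  let ?first = "\<lambda>(f, g). LEAST k. f k \<noteq> (g k :: 'b)"
  obtain K where K: "\<forall>k\<in>?first ` (A \<times> A). k < K"
    using assms finite_nat_set_iff_bounded by blast
  have "\<exists>k<K. f k \<noteq> g k" if "f \<in> A" "g \<in> A" "f \<noteq> g" for f g
  proof -
    obtain j where "f j \<noteq> g j" using \<open>f \<noteq> g\<close> by auto
    then have "f (LEAST k. f k \<noteq> g k) \<noteq> g (LEAST k. f k \<noteq> g k)" by (rule LeastI)
    moreover have "(LEAST k. f k \<noteq> g k) < K" using K that by force
    ultimately show ?thesis by blast
  qed
  then show ?thesis by blast
qed

lemma partition_small_side:
  fixes V0 V1 :: "'b::linorder set"
  assumes fin: "finite V0" "finite V1" and "V0 \<inter> V1 = {}" "card V0 + card V1 = 2 * n"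
  obtains c where "c = V0 \<or> c = V1" "card c \<le> n" "\<And>v. v \<in> V0 \<union> V1 \<Longrightarrow> card c = n \<Longrightarrow> Min c \<le> v"
proof (cases "card V0 = n \<and> card V1 = n \<and> V0 \<union> V1 \<noteq> {}")
  case True
  let ?\<mu> = "Min (V0 \<union> V1)"
  have \<mu>_le: "\<And>v. v \<in> V0 \<union> V1 \<Longrightarrow> ?\<mu> \<le> v"
    using fin by simp
  have "?\<mu> \<in> V0 \<union> V1"
    using True fin by (intro Min_in) auto
  then consider "?\<mu> \<in> V0" | "?\<mu> \<in> V1" by blast
  then show thesis
  proof cases
    case 1
    then have "Min V0 \<le> ?\<mu>" using fin by simp
    then show thesis using that[of V0] True \<mu>_le by force
  next
    case 2
    then have "Min V1 \<le> ?\<mu>" using fin by simp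
    then show thesis using that[of V1] True \<mu>_le by force
  qed
next
  case False
  with assms(4) consider "card V0 < n" | "card V1 < n" | "V0 \<union> V1 = {}" by linarith
  then show thesis
    using that[of V0] that[of V1] by cases auto
qed

lemma decompD:
  assumes "decomp N rr Lk F Fs R"
  shows decomp_Union: "F = (\<Union>i<N. Fs i)"
    and decomp_pieces: "\<And>i. i < N \<Longrightarrow> Fs i \<in> Lk"
    and decomp_Int: "\<And>i j. i < N \<Longrightarrow> j < N \<Longrightarrow> i \<noteq> j \<Longrightarrow> Fs i \<inter> Fs j = R"
    and decomp_card_root: "card R = rr"
    and decomp_root_below: "\<And>i x y. i < N \<Longrightarrow> x \<in> R \<Longrightarrow> y \<in> Fs i - R \<Longrightarrow> x < y"
    and decomp_tails_below: "\<And>i j x y. i < j \<Longrightarrow> j < N \<Longrightarrow> x \<in> Fs i - R \<Longrightarrow> y \<in> Fs j - R \<Longrightarrow> x < y"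
  using assms unfolding decomp_def by (elim conjE; blast)+

lemma decomp_piece_containing:
  assumes "decomp N rr Lk F Fs R" "x \<in> F"
  obtains i where "i < N" "x \<in> Fs i" "Fs i \<in> Lk" "Fs i \<subseteq> F"
proof -
  obtain i where "i < N" "x \<in> Fs i"
    using assms(2) unfolding decomp_Union[OF assms(1)] by blast
  then show thesis
    using that decomp_pieces[OF assms(1)] decomp_Union[OF assms(1)] by blast
qed

lemma decomp_root_subset:
  assumes "decomp N rr Lk F Fs R" "2 \<le> N" "i < N"
  shows "R \<subseteq> Fs i"
proof -
  obtain j where "j < N" "j \<noteq> i"
    using assms(2,3) by (metis One_nat_def less_2_cases_iff not_less_eq order_less_le_trans)
  then show ?thesis
    using decomp_Int[OF assms(1), of i j] assms(3) by blast
qed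

lemma decomp_below_piece:
  assumes d: "decomp N rr Lk F Fs R" and "2 \<le> N" "i < N" and x: "x \<in> Fs i - R"
  shows "{y\<in>F. y < x} = R \<union> (\<Union>j<i. Fs j - R) \<union> ({y\<in>Fs i. y < x} - R)"
proof -
  note root_below = decomp_root_below[OF d] and tails_ordered = decomp_tails_below[OF d]
    and F_eq = decomp_Union[OF d]
  have "R \<subseteq> F" using decomp_root_subset[OF d assms(2,3)] F_eq assms(3) by blast
  show ?thesis
  proof (intro set_eqI iffI)
    fix y assume y: "y \<in> {y\<in>F. y < x}"
    then obtain j where j: "j < N" "y \<in> Fs j" using F_eq by blast
    show "y \<in> R \<union> (\<Union>j<i. Fs j - R) \<union> ({y\<in>Fs i. y < x} - R)"
    proof (cases "y \<in> R")
      case False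
      then have "\<not> i < j" using tails_ordered[of i j x y] y x j by force
      then consider "j < i" | "j = i" by linarith
      then show ?thesis using j y False by cases auto
    qed simp
  next
    fix y assume "y \<in> R \<union> (\<Union>j<i. Fs j - R) \<union> ({y\<in>Fs i. y < x} - R)"
    then show "y \<in> {y\<in>F. y < x}"
      using root_below[OF assms(3) _ x] tails_ordered[OF _ assms(3) _ x] \<open>R \<subseteq> F\<close> F_eq assms(3)
      by auto
  qed
qed

lemma decomp_below_root:
  assumes "decomp N rr Lk F Fs R" "x \<in> R"
  shows "{y\<in>F. y < x} \<subseteq> R - {x}"
proof
  fix y assume y: "y \<in> {y\<in>F. y < x}"
  then have "y \<in> F" by simp
  then obtain i where "i < N" "y \<in> Fs i"
    using decomp_piece_containing[OF assms(1)] by blast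
  then show "y \<in> R - {x}"
    using decomp_root_below[OF assms(1) \<open>i < N\<close> assms(2), of y] y by fastforce
qed

lemma captured_disjointD:
  assumes capt: "captured m nseq r FF l N D" and disj: "D 0 \<inter> D 1 = {}"
  shows "\<And>j. j < N \<Longrightarrow> bij_betw (elem_at (<) (D j)) {..<card (D 0)} (D j)"
    and "\<And>j a. j < N \<Longrightarrow> a < card (D 0) \<Longrightarrow> Xi m nseq r FF (elem_at (<) (D j) a) l = int j"
    and "\<And>i j a k. i < N \<Longrightarrow> j < N \<Longrightarrow> a < card (D 0) \<Longrightarrow> k < l \<Longrightarrow>
           norm_at m FF (elem_at (<) (D i) a) k = norm_at m FF (elem_at (<) (D j) a) k"
proof -
  obtain mm R where N: "2 \<le> N"
    and card: "\<forall>j<N. finite (D j) \<and> card (D j) = mm"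
    and root: "\<forall>i<N. \<forall>j<N. i \<noteq> j \<longrightarrow> D i \<inter> D j = R"
    and Xi: "\<forall>j<N. \<forall>a. card R \<le> a \<and> a < mm \<longrightarrow> Xi m nseq r FF (elem_at (<) (D j) a) l = int j"
    and Delta: "\<forall>i<N. \<forall>j<N. i \<noteq> j \<longrightarrow> (\<forall>a. card R \<le> a \<and> a < mm \<longrightarrow>
                  Delta m FF (elem_at (<) (D i) a) (elem_at (<) (D j) a) = l)"
    using capt unfolding captured_def by (elim conjE exE) (rule that; assumption)
  have "R = {}" using root N disj by force
  have mm: "card (D 0) = mm" using card N by simp
  show "bij_betw (elem_at (<) (D j)) {..<card (D 0)} (D j)" if "j < N" for j
    using less.bij_betw_elem_at[of "D j"] card that unfolding mm by simp
  show "Xi m nseq r FF (elem_at (<) (D j) a) l = int j" if "j < N" "a < card (D 0)" for j a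
    using Xi \<open>R = {}\<close> that unfolding mm by simp
  show "norm_at m FF (elem_at (<) (D i) a) k = norm_at m FF (elem_at (<) (D j) a) k"
    if "i < N" "j < N" "a < card (D 0)" "k < l" for i j a k
  proof (cases "i = j")
    case False
    then have "Delta m FF (elem_at (<) (D i) a) (elem_at (<) (D j) a) = l"
      using Delta \<open>R = {}\<close> that unfolding mm by simp
    then show ?thesis
      using \<open>k < l\<close> not_less_Least unfolding Delta_def by blast
  qed simp
qed

locale constr_scheme =
  fixes m nseq r :: "nat \<Rightarrow> nat" and FF :: "'a::linorder set set"
  assumes scheme: "construction_scheme m nseq r FF"
    and infinite_UNIV: "infinite (UNIV :: 'a set)"
begin

abbreviation L :: "nat \<Rightarrow> 'a set set" where
  "L k \<equiv> Lev m FF k"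

lemma nseq_ge_2: "2 \<le> nseq (Suc k)"
  and r_less_m: "r (Suc k) < m k"
  and m_Suc: "m (Suc k) = r (Suc k) + (m k - r (Suc k)) * nseq (Suc k)"
  using scheme by (auto simp: construction_scheme_def is_type_def)

lemma strict_mono_m: "strict_mono m"
proof (rule strict_mono_Suc_iff[THEN iffD2], intro allI)
  fix k
  have "(m k - r (Suc k)) * 2 \<le> (m k - r (Suc k)) * nseq (Suc k)"
    using nseq_ge_2 by simp
  then show "m k < m (Suc k)"
    using m_Suc[of k] r_less_m[of k] by linarith
qed

lemma Lev_finite: "F \<in> L k \<Longrightarrow> finite F"
  and Lev_nonempty: "F \<in> L k \<Longrightarrow> F \<noteq> {}"
  and Lev_card: "F \<in> L k \<Longrightarrow> card F = m k"
  and member_Lev: "F \<in> FF \<Longrightarrow> \<exists>k. F \<in> L k"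
  using scheme by (auto simp: construction_scheme_def Lev_def)

lemma cofinal: "finite A \<Longrightarrow> \<exists>F\<in>FF. A \<subseteq> F"
  and Lev_coherent: "E \<in> L k \<Longrightarrow> F \<in> L k \<Longrightarrow> x \<in> E \<Longrightarrow> x \<in> F \<Longrightarrow> y \<in> F \<Longrightarrow> y < x \<Longrightarrow> y \<in> E"
  and Lev_Suc_decomp: "G \<in> L (Suc k) \<Longrightarrow> \<exists>Fs R. decomp (nseq (Suc k)) (r (Suc k)) (L k) G Fs R"
  using scheme unfolding construction_scheme_def by (elim conjE; blast)+

lemma Lev_initial_segment:
  "k \<le> l \<Longrightarrow> E \<in> L k \<Longrightarrow> F \<in> L l \<Longrightarrow> x \<in> E \<Longrightarrow> x \<in> F \<Longrightarrow> y \<in> E \<Longrightarrow> y < x \<Longrightarrow> y \<in> F"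
proof (induction l arbitrary: F)
  case 0
  then show ?case using Lev_coherent[of F 0 E] by simp
next
  case (Suc l)
  show ?case
  proof (cases "k = Suc l")
    case True
    then show ?thesis using Suc.prems Lev_coherent[of F k E x y] by simp
  next
    case False
    obtain Fs R where "decomp (nseq (Suc l)) (r (Suc l)) (L l) F Fs R"
      using Lev_Suc_decomp Suc.prems(3) by blast
    then obtain i where "x \<in> Fs i" "Fs i \<in> L l" "Fs i \<subseteq> F"
      using Suc.prems(5) by (rule decomp_piece_containing)
    then show ?thesis using Suc.IH[of "Fs i"] Suc.prems False by auto
  qed
qed

lemma Lev_point_below: "k \<le> l \<Longrightarrow> H \<in> L l \<Longrightarrow> x \<in> H \<Longrightarrow> \<exists>G\<in>L k. x \<in> G"
proof (induction l arbitrary: H)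
  case (Suc l)
  show ?case
  proof (cases "k = Suc l")
    case False
    obtain Fs R where "decomp (nseq (Suc l)) (r (Suc l)) (L l) H Fs R"
      using Lev_Suc_decomp Suc.prems(2) by blast
    then obtain i where "x \<in> Fs i" "Fs i \<in> L l"
      using Suc.prems(3) by (rule decomp_piece_containing)
    then show ?thesis using Suc.IH False Suc.prems(1) by simp
  qed (use Suc.prems in blast)
qed blast

lemma Lev_between:
  assumes E: "E \<in> L k" and "k \<le> j" "j \<le> l" "F \<in> L l" "E \<subseteq> F"
  shows "\<exists>G\<in>L j. E \<subseteq> G"
proof -
  have max: "Max E \<in> E" "\<And>y. y \<in> E \<Longrightarrow> y \<le> Max E"
    using Lev_finite[OF E] Lev_nonempty[OF E] by auto
  obtain G where G: "G \<in> L j" "Max E \<in> G"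
    using Lev_point_below[of j l F "Max E"] assms max(1) by blast
  have "y \<in> G" if "y \<in> E" for y
    using Lev_initial_segment[OF \<open>k \<le> j\<close> E G(1) max(1) G(2) that] max(2)[OF that] G(2)
    by (cases "y = Max E") auto
  then show ?thesis using G(1) by blast
qed

lemma Lev_superset:
  assumes E: "E \<in> L k" and "k \<le> j"
  shows "\<exists>F\<in>L j. E \<subseteq> F"
proof -
  obtain B :: "'a set" where B: "finite B" "card B = Suc (m j)"
    using infinite_arbitrarily_large[OF infinite_UNIV, of "Suc (m j)"] by auto
  obtain H where H: "H \<in> FF" "E \<union> B \<subseteq> H"
    using cofinal[of "E \<union> B"] Lev_finite[OF E] B(1) by blast
  obtain l where l: "H \<in> L l" using member_Lev H(1) by blast
  have "card B \<le> card H"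
    using H(2) Lev_finite[OF l] by (intro card_mono) auto
  then have "m j < m l" using B(2) Lev_card[OF l] by simp
  then have "j \<le> l" using strict_mono_less[OF strict_mono_m] by simp
  then show ?thesis using Lev_between[OF E \<open>k \<le> j\<close> _ l] H(2) by blast
qed

lemma Lev_cover: "\<exists>G\<in>L k. x \<in> G"
proof -
  obtain H where "H \<in> FF" "x \<in> H"
    using cofinal[of "{x}"] by auto
  moreover obtain l where "H \<in> L l"
    using member_Lev[OF \<open>H \<in> FF\<close>] by blast
  ultimately show ?thesis
    using Lev_superset[of H l k] Lev_point_below[of k l H x] by (cases "l \<le> k") auto
qed

lemma rho_le_iff: "rho m FF x y \<le> k \<longleftrightarrow> (\<exists>F\<in>L k. x \<in> F \<and> y \<in> F)"
proof
  assume le: "rho m FF x y \<le> k"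
  obtain H where "H \<in> FF" "{x, y} \<subseteq> H"
    using cofinal[of "{x, y}"] by auto
  moreover obtain l where "H \<in> L l"
    using member_Lev[OF \<open>H \<in> FF\<close>] by blast
  ultimately have "\<exists>F\<in>L l. x \<in> F \<and> y \<in> F" by blast
  then have "\<exists>F\<in>L (rho m FF x y). x \<in> F \<and> y \<in> F"
    unfolding rho_def by (rule LeastI)
  then obtain F where F: "F \<in> L (rho m FF x y)" "x \<in> F" "y \<in> F" by blast
  obtain F' where "F' \<in> L k" "F \<subseteq> F'"
    using Lev_superset[OF F(1) le] by blast
  with F show "\<exists>F\<in>L k. x \<in> F \<and> y \<in> F" by blast
qed (simp add: rho_def Least_le)

lemma norm_at_eq_rank:
  assumes "G \<in> L k" "x \<in> G"
  shows "norm_at m FF x k = card {y\<in>G. y < x}"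
proof -
  have "{y. y < x \<and> rho m FF x y \<le> k} = {y\<in>G. y < x}"
    using assms Lev_coherent[of G k _ x] by (auto simp: rho_le_iff)
  then show ?thesis unfolding norm_at_def by simp
qed

lemma rank_in_decomp_root:
  assumes d: "decomp (nseq (Suc k)) (r (Suc k)) (L k) F Fs R" and x: "x \<in> R"
  shows "card {y\<in>F. y < x} < r (Suc k)"
proof -
  have "0 < nseq (Suc k)" using nseq_ge_2[of k] by simp
  then have "finite R"
    using decomp_root_subset[OF d nseq_ge_2] Lev_finite[OF decomp_pieces[OF d]]
    by (meson finite_subset)
  then have "card {y\<in>F. y < x} \<le> card (R - {x})"
    using decomp_below_root[OF d x] by (intro card_mono) auto
  also have "\<dots> < card R"
    using \<open>finite R\<close> x by (rule card_Diff1_less)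
  finally show ?thesis using decomp_card_root[OF d] by simp
qed

lemma rank_in_decomp_piece:
  assumes d: "decomp (nseq (Suc k)) (r (Suc k)) (L k) F Fs R"
    and i: "i < nseq (Suc k)" and x: "x \<in> Fs i - R"
  shows "card {y\<in>F. y < x} = r (Suc k) + i * (m k - r (Suc k)) + (card {y\<in>Fs i. y < x} - r (Suc k))"
    and "r (Suc k) \<le> card {y\<in>Fs i. y < x}"
    and "card {y\<in>Fs i. y < x} < m k"
proof -
  let ?S = "{y\<in>Fs i. y < x}" and ?tails = "\<Union>j<i. Fs j - R"
  have piece: "finite (Fs j) \<and> card (Fs j) = m k \<and> R \<subseteq> Fs j" if "j < nseq (Suc k)" for j
    using decomp_pieces[OF d that] Lev_finite Lev_card decomp_root_subset[OF d nseq_ge_2 that]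
    by blast
  have R: "finite R" "card R = r (Suc k)"
    using piece[OF i] finite_subset decomp_card_root[OF d] by auto
  have RS: "R \<subseteq> ?S"
    using piece[OF i] decomp_root_below[OF d i _ x] by blast
  show "r (Suc k) \<le> card ?S"
    using card_mono[OF _ RS] piece[OF i] R by simp
  have "?S \<subset> Fs i" using x by auto
  then show "card ?S < m k"
    using piece[OF i] psubset_card_mono by metis
  have "card (Fs j - R) = m k - r (Suc k)" if "j < i" for j
    using piece[of j] that i R card_Diff_subset[OF R(1)] by simp
  moreover have "(Fs j - R) \<inter> (Fs j' - R) = {}" if "j < i" "j' < i" "j \<noteq> j'" for j j'
    using decomp_Int[OF d, of j j'] that i by auto
  ultimately have card_tails: "card ?tails = i * (m k - r (Suc k))"
    using piece i by (subst card_UN_disjoint) auto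
  have tails_S: "?tails \<inter> (?S - R) = {}"
  proof -
    have "(Fs j - R) \<inter> (Fs i - R) = {}" if "j < i" for j
      using decomp_Int[OF d, of j i] that i by auto
    then show ?thesis by blast
  qed
  have fin: "finite ?tails" "finite (?S - R)"
    using piece i by auto
  have "card (R \<union> ?tails \<union> (?S - R)) = card (R \<union> ?tails) + card (?S - R)"
    by (rule card_Un_disjoint) (use R(1) fin tails_S in auto)
  also have "card (R \<union> ?tails) = card R + card ?tails"
    by (rule card_Un_disjoint) (use R(1) fin in auto)
  also have "card (?S - R) = card ?S - r (Suc k)"
    using card_Diff_subset[OF R(1) RS] R by simp
  finally show "card {y\<in>F. y < x} = r (Suc k) + i * (m k - r (Suc k)) + (card ?S - r (Suc k))"
    unfolding decomp_below_piece[OF d nseq_ge_2 i x] using R card_tails by simp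
qed

text \<open>In a member of \<open>L (Suc k)\<close> the root fills the first \<open>r (Suc k)\<close> places, followed by the
  tails \<open>Fs 0 - R, Fs 1 - R, \<dots>\<close>, each of length \<open>m k - r (Suc k)\<close>; so the position of a point
  determines its value of \<open>Xi\<close>.\<close>
definition Xi_of_rank :: "nat \<Rightarrow> nat \<Rightarrow> int" where
  "Xi_of_rank k p = (if p < r (Suc k) then -1 else int ((p - r (Suc k)) div (m k - r (Suc k))))"

lemma Xi_of_rank_decomp:
  assumes F: "F \<in> L (Suc k)" and d: "decomp (nseq (Suc k)) (r (Suc k)) (L k) F Fs R" and "x \<in> F"
  shows "x \<in> R \<Longrightarrow> Xi_of_rank k (norm_at m FF x (Suc k)) = -1"
    and "i < nseq (Suc k) \<Longrightarrow> x \<in> Fs i - R \<Longrightarrow> Xi_of_rank k (norm_at m FF x (Suc k)) = int i"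
proof -
  have norm: "norm_at m FF x (Suc k) = card {y\<in>F. y < x}"
    using norm_at_eq_rank[OF F \<open>x \<in> F\<close>] .
  show "x \<in> R \<Longrightarrow> Xi_of_rank k (norm_at m FF x (Suc k)) = -1"
    using rank_in_decomp_root[OF d] by (simp add: norm Xi_of_rank_def)
  assume i: "i < nseq (Suc k)" and x: "x \<in> Fs i - R"
  let ?c = "card {y\<in>Fs i. y < x}" and ?b = "m k - r (Suc k)"
  have "?c - r (Suc k) < ?b"
    using rank_in_decomp_piece(2,3)[OF d i x] by linarith
  then have "(i * ?b + (?c - r (Suc k))) div ?b = i"
    by simp
  then show "Xi_of_rank k (norm_at m FF x (Suc k)) = int i"
    using rank_in_decomp_piece(1)[OF d i x] by (simp add: norm Xi_of_rank_def)
qed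

lemma Xi_Suc: "Xi m nseq r FF x (Suc k) = Xi_of_rank k (norm_at m FF x (Suc k))"
proof -
  let ?v = "Xi_of_rank k (norm_at m FF x (Suc k))"
  let ?P = "\<lambda>v F Fs R. decomp (nseq (Suc k)) (r (Suc k)) (L k) F Fs R \<and>
              (x \<in> R \<and> v = -1 \<or> (\<exists>i<nseq (Suc k). x \<in> Fs i - R \<and> v = int i))"
  obtain F where F: "F \<in> L (Suc k)" "x \<in> F" using Lev_cover by blast
  obtain Fs R where d: "decomp (nseq (Suc k)) (r (Suc k)) (L k) F Fs R"
    using Lev_Suc_decomp[OF F(1)] by blast
  have "?P ?v F Fs R"
  proof (cases "x \<in> R")
    case False
    then obtain i where "i < nseq (Suc k)" "x \<in> Fs i - R"
      using decomp_piece_containing[OF d F(2)] by blast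
    then show ?thesis using d Xi_of_rank_decomp(2)[OF F(1) d F(2)] by blast
  qed (use d Xi_of_rank_decomp(1)[OF F(1) d F(2)] in blast)
  then have exist: "\<exists>F\<in>L (Suc k). x \<in> F \<and> (\<exists>Fs R. ?P ?v F Fs R)"
    using F by blast
  have unique: "v = ?v" if witness: "\<exists>F\<in>L (Suc k). x \<in> F \<and> (\<exists>Fs R. ?P v F Fs R)" for v
  proof -
    obtain F' Fs' R' where F': "F' \<in> L (Suc k)" "x \<in> F'" and "?P v F' Fs' R'"
      using witness by blast
    then show ?thesis using Xi_of_rank_decomp[OF F'(1) _ F'(2), of Fs' R'] by auto
  qed
  show ?thesis
    unfolding Xi_def
    by (simp only: Suc_not_Zero if_False diff_Suc_1,
        rule the_equality[where P = "\<lambda>v. \<exists>F\<in>L (Suc k). x \<in> F \<and> (\<exists>Fs R. ?P v F Fs R)",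
          OF exist unique])
qed

lemma norm_bounds_of_Xi_nonneg:
  assumes "0 \<le> Xi m nseq r FF x (Suc k)"
  shows "r (Suc k) \<le> norm_at m FF x k \<and> norm_at m FF x k < m k"
proof -
  obtain F where F: "F \<in> L (Suc k)" "x \<in> F" using Lev_cover by blast
  obtain Fs R where d: "decomp (nseq (Suc k)) (r (Suc k)) (L k) F Fs R"
    using Lev_Suc_decomp[OF F(1)] by blast
  have "x \<notin> R"
    using assms Xi_of_rank_decomp(1)[OF F(1) d F(2)] by (auto simp: Xi_Suc)
  then obtain i where i: "i < nseq (Suc k)" "x \<in> Fs i - R" "Fs i \<in> L k"
    using decomp_piece_containing[OF d F(2)] by blast
  then have "norm_at m FF x k = card {y\<in>Fs i. y < x}"
    using norm_at_eq_rank by blast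
  then show ?thesis using rank_in_decomp_piece(2,3)[OF d i(1,2)] by simp
qed

lemma e_fun_eq_below:
  assumes "\<And>k. k < l \<Longrightarrow> norm_at m FF x k = norm_at m FF y k" and "k < l"
  shows "e_fun m nseq r FF C n x k = e_fun m nseq r FF C n y k"
proof (cases k)
  case (Suc k')
  with assms show ?thesis
    by (simp add: e_fun_def Let_def Xi_Suc)
qed (simp add: e_fun_def Xi_def)

lemma captured_norms_below_level:
  assumes capt: "captured m nseq r FF (Suc k) (nseq (Suc k)) D" and disj: "D 0 \<inter> D 1 = {}"
    and G: "G \<in> L k" "D 0 \<subseteq> G"
  defines "\<nu> \<equiv> \<lambda>a. norm_at m FF (elem_at (<) (D 0) a) k"
  shows "inj_on \<nu> {..<card (D 0)}" and "\<nu> ` {..<card (D 0)} \<subseteq> {r (Suc k)..<m k}"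
proof -
  note D = captured_disjointD[OF capt disj]
  have N: "0 < nseq (Suc k)" "1 < nseq (Suc k)" using nseq_ge_2[of k] by auto
  have x0: "bij_betw (elem_at (<) (D 0)) {..<card (D 0)} (D 0)" using D(1)[OF N(1)] .
  have in_G: "elem_at (<) (D 0) a \<in> G" if "a < card (D 0)" for a
    using bij_betw_apply[OF x0] G(2) that by auto
  then have rank: "\<nu> a = card {y\<in>G. y < elem_at (<) (D 0) a}" if "a < card (D 0)" for a
    unfolding \<nu>_def using norm_at_eq_rank[OF G(1)] that by blast
  show "inj_on \<nu> {..<card (D 0)}"
  proof (rule inj_onI)
    fix a b assume a: "a \<in> {..<card (D 0)}" and b: "b \<in> {..<card (D 0)}" and "\<nu> a = \<nu> b"
    then have "card {y\<in>G. y < elem_at (<) (D 0) a} = card {y\<in>G. y < elem_at (<) (D 0) b}"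
      using rank by simp
    then have "elem_at (<) (D 0) a = elem_at (<) (D 0) b"
      by (rule inj_onD[OF bij_betw_imp_inj_on[OF less.bij_betw_rank[OF Lev_finite[OF G(1)]]]])
        (use in_G a b in auto)
    then show "a = b" using inj_onD[OF bij_betw_imp_inj_on[OF x0]] a b by blast
  qed
  show "\<nu> ` {..<card (D 0)} \<subseteq> {r (Suc k)..<m k}"
  proof clarify
    fix a assume "a < card (D 0)"
    then have "\<nu> a = norm_at m FF (elem_at (<) (D 1) a) k"
      unfolding \<nu>_def using D(3)[OF N \<open>a < card (D 0)\<close> lessI] by simp
    moreover have "Xi m nseq r FF (elem_at (<) (D 1) a) (Suc k) = 1"
      using D(2)[OF N(2) \<open>a < card (D 0)\<close>] by simp
    ultimately show "\<nu> a \<in> {r (Suc k)..<m k}"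
      using norm_bounds_of_Xi_nonneg[of "elem_at (<) (D 1) a" k] by simp
  qed
qed

end

locale capturing_scheme = constr_scheme m nseq r FF
  for m nseq r :: "nat \<Rightarrow> nat" and FF :: "'a::linorder set set" +
  fixes C :: "nat \<Rightarrow> nat \<Rightarrow> nat set" and n :: nat
  assumes capturing: "fully_Delta_capturing m nseq r FF"
    and C_enum: "\<forall>k. C k ` {i. 0 < i \<and> i < nseq (Suc k)} = {A. A \<subseteq> {r (Suc k)..<m k} \<and> card A \<le> n}"
begin

abbreviation e :: "'a \<Rightarrow> nat \<Rightarrow> int" where
  "e \<equiv> e_fun m nseq r FF C n"

lemma capturing_above:
  assumes "S \<subseteq> {A. finite A}" "\<not> countable S"
  obtains k D where "K \<le> k" "\<forall>j<nseq (Suc k). D j \<in> S"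
    "\<forall>i<nseq (Suc k). \<forall>j<nseq (Suc k). i \<noteq> j \<longrightarrow> D i \<noteq> D j"
    "captured m nseq r FF (Suc k) (nseq (Suc k)) D"
proof -
  have "infinite {l. 0 < l \<and> (\<exists>D. (\<forall>j<nseq l. D j \<in> S) \<and> inj_on D {..<nseq l} \<and>
                                  captured m nseq r FF l (nseq l) D)}"
    using capturing assms unfolding fully_Delta_capturing_def by blast
  then obtain l D where "K < l" "\<forall>j<nseq l. D j \<in> S" "inj_on D {..<nseq l}"
      "captured m nseq r FF l (nseq l) D"
    unfolding infinite_nat_iff_unbounded by blast
  then show thesis
    using that[of "l - 1" D] by (cases l) (auto dest: inj_onD)
qed

lemma e_lex_less_at_level:
  assumes agree: "\<forall>i<Suc k. e x i = e y i"
    and Xi: "Xi m nseq r FF x (Suc k) = 0" "Xi m nseq r FF y (Suc k) = int j" and "0 < j"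
  defines "in_C \<equiv> norm_at m FF y k \<in> C k j \<or> (card (C k j) = n \<and> norm_at m FF y k < Min (C k j))"
  shows "lex_less (e x) (e y) \<longleftrightarrow> in_C" and "lex_less (e y) (e x) \<longleftrightarrow> \<not> in_C"
proof -
  have "e x (Suc k) = 0" "e y (Suc k) = (if in_C then int j else - int j)"
    using Xi by (simp_all add: e_fun_def Let_def in_C_def)
  then show "lex_less (e x) (e y) \<longleftrightarrow> in_C" "lex_less (e y) (e x) \<longleftrightarrow> \<not> in_C"
    using lex_less_iff_at_first_difference[of "Suc k" "e x" "e y"]
      lex_less_iff_at_first_difference[of "Suc k" "e y" "e x"] agree \<open>0 < j\<close>
    by auto
qed

lemma range_e_uncountable:
  assumes "\<not> countable (UNIV :: 'a set)"
  shows "\<not> countable (range e)"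
proof
  assume "countable (range e)"
  moreover have "UNIV = (\<Union>f\<in>range e. e -` {f})" by auto
  ultimately obtain f where fiber: "\<not> countable (e -` {f})"
    using assms by (metis countable_UN)
  let ?S = "(\<lambda>x. {x}) ` (e -` {f})"
  have "?S \<subseteq> {A. finite A}" by auto
  moreover have "\<not> countable ?S"
    using fiber countable_image_inj_on[of "\<lambda>x. {x}" "e -` {f}"] by (auto simp: inj_on_def)
  ultimately obtain k D where D: "\<forall>j<nseq (Suc k). D j \<in> ?S"
    and distinct: "\<forall>i<nseq (Suc k). \<forall>j<nseq (Suc k). i \<noteq> j \<longrightarrow> D i \<noteq> D j"
    and capt: "captured m nseq r FF (Suc k) (nseq (Suc k)) D"
    by (rule capturing_above) blast
  have N: "0 < nseq (Suc k)" "1 < nseq (Suc k)" using nseq_ge_2[of k] by auto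
  obtain x0 x1 where x: "D 0 = {x0}" "D 1 = {x1}" "e x0 = f" "e x1 = f"
    using D N by blast
  have disj: "D 0 \<inter> D 1 = {}" using distinct[rule_format, of 0 1] N x by auto
  have "0 < card (D 0)" using x by simp
  then have "Xi m nseq r FF x0 (Suc k) = 0" "Xi m nseq r FF x1 (Suc k) = 1"
    using captured_disjointD(2)[OF capt disj N(1)] captured_disjointD(2)[OF capt disj N(2)] x
    by (auto simp: less.elem_at_singleton)
  then have "e x0 (Suc k) = 0" "e x1 (Suc k) \<noteq> 0"
    by (auto simp: e_fun_def Let_def)
  then show False using x by simp
qed

text \<open>This is where the enumeration \<open>C\<close>, i.e. the size condition on \<open>nseq\<close>, is used: every
  2-colouring of \<open>2n\<close> norms at level \<open>k\<close> is cut out by some \<open>C k j\<close>, up to swapping the colours.\<close>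
lemma C_realizes_coloring:
  assumes inj: "inj_on \<nu> {..<2 * n}" and range: "\<nu> ` {..<2 * n} \<subseteq> {r (Suc k)..<m k}"
  obtains j b where "0 < j" "j < nseq (Suc k)"
    "\<And>a. a < 2 * n \<Longrightarrow>
       (\<nu> a \<in> C k j \<or> (card (C k j) = n \<and> \<nu> a < Min (C k j))) \<longleftrightarrow> (P a \<longleftrightarrow> b)"
proof -
  let ?I = "{..<2 * n}"
  define V0 where "V0 = \<nu> ` {a\<in>?I. P a}"
  define V1 where "V1 = \<nu> ` {a\<in>?I. \<not> P a}"
  have V: "V0 \<union> V1 = \<nu> ` ?I" unfolding V0_def V1_def by auto
  have mem: "\<nu> a \<in> V0 \<longleftrightarrow> P a" "\<nu> a \<in> V1 \<longleftrightarrow> \<not> P a" if "a \<in> ?I" for a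
    unfolding V0_def V1_def using inj_on_image_mem_iff[OF inj that] that by auto
  have disj: "V0 \<inter> V1 = {}"
    using mem unfolding V0_def V1_def by auto
  have fin: "finite V0" "finite V1" by (simp_all add: V0_def V1_def)
  have "card V0 + card V1 = 2 * n"
    using card_Un_disjoint[OF fin disj] card_image[OF inj] V by simp
  then obtain c where c: "c = V0 \<or> c = V1" "card c \<le> n"
      "\<And>v. v \<in> V0 \<union> V1 \<Longrightarrow> card c = n \<Longrightarrow> Min c \<le> v"
    by (rule partition_small_side[OF fin disj]) blast
  have "c \<subseteq> {r (Suc k)..<m k}" using c(1) V range by auto
  then have "c \<in> C k ` {i. 0 < i \<and> i < nseq (Suc k)}"
    using C_enum c(2) by simp
  then obtain j where j: "0 < j" "j < nseq (Suc k)" "C k j = c"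
    by auto
  show thesis
  proof (rule that[OF j(1,2)])
    fix a assume "a < 2 * n"
    then have "\<nu> a \<in> V0 \<union> V1" using V by auto
    then have "(\<nu> a \<in> c \<or> (card c = n \<and> \<nu> a < Min c)) \<longleftrightarrow> \<nu> a \<in> c"
      using c(3) by fastforce
    also have "\<dots> \<longleftrightarrow> (P a \<longleftrightarrow> c = V0)"
      using c(1) mem \<open>a < 2 * n\<close> by auto
    finally show "(\<nu> a \<in> C k j \<or> (card (C k j) = n \<and> \<nu> a < Min (C k j))) \<longleftrightarrow> (P a \<longleftrightarrow> c = V0)"
      using j(3) by simp
  qed
qed

lemma captured_lex_ranks:
  assumes capt: "captured m nseq r FF (Suc k) (nseq (Suc k)) D" and disj: "D 0 \<inter> D 1 = {}"
    and sep: "\<And>x y. x \<in> D 0 \<Longrightarrow> y \<in> D 0 \<Longrightarrow> x \<noteq> y \<Longrightarrow> \<exists>k'<Suc k. e x k' \<noteq> e y k'"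
  obtains rk where "rk ` {..<card (D 0)} = {..<card (D 0)}"
    "\<And>j a. j < nseq (Suc k) \<Longrightarrow> a < card (D 0) \<Longrightarrow>
       elem_at lex_less (e ` D j) (rk a) = e (elem_at (<) (D j) a)"
proof -
  let ?I = "{..<card (D 0)}"
  define f where "f j a = e (elem_at (<) (D j) a)" for j a
  note D = captured_disjointD[OF capt disj]
  have N: "0 < nseq (Suc k)" using nseq_ge_2[of k] by simp
  have agree: "f j a k' = f 0 a k'" if "j < nseq (Suc k)" "a \<in> ?I" "k' < Suc k" for j a k'
    unfolding f_def using e_fun_eq_below[OF D(3)[OF that(1) N] that(3)] that(2) by simp
  have sep0: "\<exists>k'<Suc k. f 0 a k' \<noteq> f 0 b k'" if "a \<in> ?I" "b \<in> ?I" "a \<noteq> b" for a b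
    using sep bij_betw_apply[OF D(1)[OF N]] inj_onD[OF bij_betw_imp_inj_on[OF D(1)[OF N]]] that
    unfolding f_def by metis
  define rk where "rk a = card {b\<in>?I. lex_less (f 0 b) (f 0 a)}" for a
  have "inj_on (f 0) ?I" by (rule inj_onI) (metis sep0)
  then have "rk ` ?I = ?I"
    using lex.bij_betw_image_rank[of ?I "f 0"] unfolding rk_def bij_betw_def by simp
  moreover have "elem_at lex_less (e ` D j) (rk a) = f j a"
    if "j < nseq (Suc k)" "a < card (D 0)" for j a
  proof -
    have "e ` D j = e ` elem_at (<) (D j) ` ?I"
      using bij_betw_imp_surj_on[OF D(1)[OF that(1)]] by simp
    also have "\<dots> = f j ` ?I"
      unfolding f_def by (rule image_image)
    finally show ?thesis
      unfolding rk_def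
      using elem_at_lex_image_agree_below[OF finite_lessThan agree[OF that(1)] sep0] that(2) by simp
  qed
  ultimately show thesis
    unfolding f_def by (rule that)
qed

lemma captured_family_realizes_pattern:
  fixes \<tau> :: "nat \<Rightarrow> nat"
  assumes capt: "captured m nseq r FF (Suc k) (nseq (Suc k)) D" and disj: "D 0 \<inter> D 1 = {}"
    and card: "card (D 0) = 2 * n" and G: "G \<in> L k" "D 0 \<subseteq> G"
    and sep: "\<And>x y. x \<in> D 0 \<Longrightarrow> y \<in> D 0 \<Longrightarrow> x \<noteq> y \<Longrightarrow> \<exists>k'<Suc k. e x k' \<noteq> e y k'"
  obtains i j where "i < nseq (Suc k)" "j < nseq (Suc k)" "i \<noteq> j"
    "\<forall>p<2 * n. lex_less (elem_at lex_less (e ` D i) p) (elem_at lex_less (e ` D j) p) \<longleftrightarrow> \<tau> p = 0"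
proof -
  let ?N = "nseq (Suc k)" and ?I = "{..<2 * n}"
  define x where "x j = elem_at (<) (D j)" for j
  define \<nu> where "\<nu> a = norm_at m FF (x 0 a) k" for a
  note D = captured_disjointD[OF capt disj, unfolded card, folded x_def]
  have N: "0 < ?N" using nseq_ge_2[of k] by simp
  obtain rk where rk_onto: "rk ` ?I = ?I"
    and rk: "\<And>j a. j < ?N \<Longrightarrow> a \<in> ?I \<Longrightarrow> elem_at lex_less (e ` D j) (rk a) = e (x j a)"
    using captured_lex_ranks[OF capt disj sep] unfolding card x_def by auto
  have "inj_on \<nu> ?I" "\<nu> ` ?I \<subseteq> {r (Suc k)..<m k}"
    using captured_norms_below_level[OF capt disj G] unfolding card \<nu>_def x_def by auto
  then obtain j b where j: "0 < j" "j < ?N" and in_C: "\<And>a. a < 2 * n \<Longrightarrow>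
      (\<nu> a \<in> C k j \<or> (card (C k j) = n \<and> \<nu> a < Min (C k j))) \<longleftrightarrow> (\<tau> (rk a) = 0 \<longleftrightarrow> b)"
    by (rule C_realizes_coloring[where P = "\<lambda>a. \<tau> (rk a) = 0"]) blast
  have cmp: "lex_less (e (x 0 a)) (e (x j a)) \<longleftrightarrow> (\<tau> (rk a) = 0 \<longleftrightarrow> b)"
    "lex_less (e (x j a)) (e (x 0 a)) \<longleftrightarrow> \<not> (\<tau> (rk a) = 0 \<longleftrightarrow> b)" if "a \<in> ?I" for a
  proof -
    have "Xi m nseq r FF (x 0 a) (Suc k) = 0" "Xi m nseq r FF (x j a) (Suc k) = int j"
      using D(2)[OF N] D(2)[OF j(2)] that by simp_all
    moreover have "\<forall>i<Suc k. e (x 0 a) i = e (x j a) i"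
      using e_fun_eq_below[OF D(3)[OF N j(2)]] that by simp
    moreover have "norm_at m FF (x j a) k = \<nu> a"
      unfolding \<nu>_def using D(3)[OF j(2) N] that by simp
    ultimately show "lex_less (e (x 0 a)) (e (x j a)) \<longleftrightarrow> (\<tau> (rk a) = 0 \<longleftrightarrow> b)"
      "lex_less (e (x j a)) (e (x 0 a)) \<longleftrightarrow> \<not> (\<tau> (rk a) = 0 \<longleftrightarrow> b)"
      using e_lex_less_at_level[of k "x 0 a" "x j a" j] in_C[of a] that j(1) by auto
  qed
  obtain i i' where ii: "i < ?N" "i' < ?N" "i \<noteq> i'"
    "\<And>a. a \<in> ?I \<Longrightarrow> lex_less (e (x i a)) (e (x i' a)) \<longleftrightarrow> \<tau> (rk a) = 0"
  proof (cases b)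
    case True
    show thesis by (rule that[of 0 j]) (use N j cmp True in auto)
  next
    case False
    show thesis by (rule that[of j 0]) (use N j cmp False in auto)
  qed
  show thesis
  proof (rule that[OF ii(1-3)], intro allI impI)
    fix p assume "p < 2 * n"
    then obtain a where "a \<in> ?I" "p = rk a" using rk_onto by auto
    then show "lex_less (elem_at lex_less (e ` D i) p) (elem_at lex_less (e ` D i') p) \<longleftrightarrow> \<tau> p = 0"
      using rk ii by simp
  qed
qed

lemma uniform_family_realizes_pattern:
  fixes \<tau> :: "nat \<Rightarrow> nat"
  assumes unc: "\<not> countable S" and disj: "\<And>X Y. X \<in> S \<Longrightarrow> Y \<in> S \<Longrightarrow> X \<noteq> Y \<Longrightarrow> X \<inter> Y = {}"
    and card: "\<And>X. X \<in> S \<Longrightarrow> finite X \<and> card X = 2 * n"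
    and sep: "\<And>X x y. X \<in> S \<Longrightarrow> x \<in> X \<Longrightarrow> y \<in> X \<Longrightarrow> x \<noteq> y \<Longrightarrow> \<exists>k<K. e x k \<noteq> e y k"
    and lev: "\<And>X. X \<in> S \<Longrightarrow> \<exists>F\<in>L K. X \<subseteq> F"
  shows "\<exists>X\<in>S. \<exists>Y\<in>S. X \<noteq> Y \<and>
    (\<forall>p<2 * n. lex_less (elem_at lex_less (e ` X) p) (elem_at lex_less (e ` Y) p) \<longleftrightarrow> \<tau> p = 0)"
proof -
  have "S \<subseteq> {A. finite A}" using card by blast
  then obtain k D where "K \<le> k" and D: "\<forall>j<nseq (Suc k). D j \<in> S"
    and distinct: "\<forall>i<nseq (Suc k). \<forall>j<nseq (Suc k). i \<noteq> j \<longrightarrow> D i \<noteq> D j"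
    and capt: "captured m nseq r FF (Suc k) (nseq (Suc k)) D"
    by (rule capturing_above[OF _ unc]) blast
  have N: "0 < nseq (Suc k)" "1 < nseq (Suc k)" using nseq_ge_2[of k] by auto
  then have "D 0 \<inter> D 1 = {}"
    using D distinct by (intro disj) auto
  moreover obtain F where "F \<in> L K" "D 0 \<subseteq> F" using lev D N by blast
  then obtain G where "G \<in> L k" "D 0 \<subseteq> G" using Lev_superset \<open>K \<le> k\<close> by blast
  moreover have "\<exists>k'<Suc k. e x k' \<noteq> e y k'" if xy: "x \<in> D 0" "y \<in> D 0" "x \<noteq> y" for x y
  proof -
    obtain k' where "k' < K" "e x k' \<noteq> e y k'"
      using sep[OF _ xy] D N by blast
    then show ?thesis using \<open>K \<le> k\<close> by (intro exI[of _ k']) simp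
  qed
  ultimately obtain i j where ij: "i < nseq (Suc k)" "j < nseq (Suc k)" "i \<noteq> j" and pattern:
    "\<forall>p<2 * n. lex_less (elem_at lex_less (e ` D i) p) (elem_at lex_less (e ` D j) p) \<longleftrightarrow> \<tau> p = 0"
    using captured_family_realizes_pattern[OF capt] card D N by metis
  show ?thesis
  proof (intro bexI conjI)
    show "D i \<noteq> D j" using distinct ij by blast
  qed (use pattern D ij in auto)
qed

lemma uniformly_separated_subfamily:
  assumes "\<not> countable S" "\<And>X. X \<in> S \<Longrightarrow> finite X \<and> inj_on e X"
  obtains K where "\<not> countable {X\<in>S. (\<forall>x\<in>X. \<forall>y\<in>X. x \<noteq> y \<longrightarrow> (\<exists>k<K. e x k \<noteq> e y k)) \<and>
                                    (\<exists>F\<in>L K. X \<subseteq> F)}"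
proof -
  define P where "P X K \<longleftrightarrow> (\<forall>x\<in>X. \<forall>y\<in>X. x \<noteq> y \<longrightarrow> (\<exists>k<K. e x k \<noteq> e y k)) \<and> (\<exists>F\<in>L K. X \<subseteq> F)"
    for X K
  have P_ex: "\<exists>K. P X K" if X: "X \<in> S" for X
  proof -
    obtain K1 where "\<forall>f\<in>e ` X. \<forall>g\<in>e ` X. f \<noteq> g \<longrightarrow> (\<exists>k<K1. f k \<noteq> g k)"
      using finite_functions_separated_below assms(2)[OF X] by blast
    moreover have "inj_on e X" using assms(2)[OF X] by simp
    ultimately have "\<forall>x\<in>X. \<forall>y\<in>X. x \<noteq> y \<longrightarrow> (\<exists>k<K1. e x k \<noteq> e y k)"
      by (metis image_eqI inj_onD)
    moreover obtain F K2 where "F \<in> L K2" "X \<subseteq> F"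
      using cofinal assms(2)[OF X] member_Lev by metis
    moreover obtain F' where "F' \<in> L (max K1 K2)" "F \<subseteq> F'"
      using Lev_superset[OF \<open>F \<in> L K2\<close>] by (meson max.cobounded2)
    ultimately have "P X (max K1 K2)"
      unfolding P_def by (meson max.cobounded1 less_le_trans subset_trans)
    then show ?thesis ..
  qed
  obtain K where "\<not> countable {X\<in>S. P X K}"
    using uncountable_subfamily_common_index[where P = P, OF assms(1) P_ex] by blast
  then show thesis
    unfolding P_def by (rule that)
qed

lemma disjoint_family_realizes_pattern:
  fixes \<tau> :: "nat \<Rightarrow> nat"
  assumes A: "\<A> \<subseteq> {a. a \<subseteq> range e \<and> finite a \<and> card a = 2 * n}"
    and unc: "\<not> countable \<A>" and disj: "\<forall>a\<in>\<A>. \<forall>b\<in>\<A>. a \<noteq> b \<longrightarrow> a \<inter> b = {}"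
  shows "\<exists>a\<in>\<A>. \<exists>b\<in>\<A>. a \<noteq> b \<and>
           (\<forall>i<2 * n. lex_less (elem_at lex_less a i) (elem_at lex_less b i) \<longleftrightarrow> \<tau> i = 0)"
proof -
  obtain S where bij: "bij_betw (image e) S \<A>" and inj: "\<And>X. X \<in> S \<Longrightarrow> inj_on e X"
    using preimage_family[of \<A> e] A by blast
  have S: "e ` X \<in> \<A>" "finite X" "card X = 2 * n" if "X \<in> S" for X
    using bij_betw_apply[OF bij that] A card_image[OF inj[OF that]]
      finite_image_iff[OF inj[OF that]]
    by auto
  have "\<not> countable S"
    using unc bij_betw_imp_surj_on[OF bij] by (metis countable_image)
  then obtain K where unc_K: "\<not> countable {X\<in>S. (\<forall>x\<in>X. \<forall>y\<in>X. x \<noteq> y \<longrightarrow> (\<exists>k<K. e x k \<noteq> e y k)) \<and>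
                                              (\<exists>F\<in>L K. X \<subseteq> F)}" (is "\<not> countable ?S")
    using uniformly_separated_subfamily inj S by blast
  have "\<exists>X\<in>?S. \<exists>Y\<in>?S. X \<noteq> Y \<and>
    (\<forall>p<2 * n. lex_less (elem_at lex_less (e ` X) p) (elem_at lex_less (e ` Y) p) \<longleftrightarrow> \<tau> p = 0)"
  proof (rule uniform_family_realizes_pattern[OF unc_K])
    show "X \<inter> Y = {}" if "X \<in> ?S" "Y \<in> ?S" "X \<noteq> Y" for X Y
    proof -
      have "X \<in> S" "Y \<in> S" using that(1,2) by simp_all
      moreover from this have "e ` X \<noteq> e ` Y"
        using inj_onD[OF bij_betw_imp_inj_on[OF bij], of X Y] that(3) by auto
      ultimately have "e ` X \<inter> e ` Y = {}" using disj S(1) by blast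
      then show ?thesis by blast
    qed
  qed (use S in auto)
  then obtain X Y where XY: "X \<in> S" "Y \<in> S" "X \<noteq> Y" and pattern:
    "\<forall>p<2 * n. lex_less (elem_at lex_less (e ` X) p) (elem_at lex_less (e ` Y) p) \<longleftrightarrow> \<tau> p = 0"
    by blast
  show ?thesis
  proof (intro bexI conjI)
    show "e ` X \<noteq> e ` Y"
      using inj_onD[OF bij_betw_imp_inj_on[OF bij], of X Y] XY by auto
  qed (use pattern S(1) XY in auto)
qed

end

theorem mainTheorem6:
  fixes \<F> :: "'a::wellorder set set"
    and m nseq r :: "nat \<Rightarrow> nat"
    and C :: "nat \<Rightarrow> nat \<Rightarrow> nat set"
    and n :: nat
  assumes omega1_uncountable: "\<not> countable (UNIV :: 'a set)"
    and omega1_segments: "\<forall>x::'a. countable {y. y < x}"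
    and scheme: "construction_scheme m nseq r \<F>"
    and capturing: "fully_Delta_capturing m nseq r \<F>"
    and big: "\<forall>k. nseq (Suc k) \<ge> 2 ^ (m k)"
    and C_enum: "\<forall>k. C k ` {i. 0 < i \<and> i < nseq (Suc k)} =
                       {A. A \<subseteq> {r (Suc k)..<m k} \<and> card A \<le> n}"
  shows "entangled lex_less (2 * n) (range (e_fun m nseq r \<F> C n))"
proof -
  have "infinite (UNIV :: 'a set)"
    using omega1_uncountable countable_finite by blast
  with scheme capturing C_enum interpret capturing_scheme m nseq r \<F> C n
    by unfold_locales
  show ?thesis
    unfolding entangled_def
  proof (intro conjI allI impI)
    show "\<not> countable (range e)"
      using omega1_uncountable by (rule range_e_uncountable)
  next
    fix \<tau> :: "nat \<Rightarrow> nat" and \<A>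
    assume "\<A> \<subseteq> {a. a \<subseteq> range e \<and> finite a \<and> card a = 2 * n} \<and> \<not> countable \<A> \<and>
      (\<forall>a\<in>\<A>. \<forall>b\<in>\<A>. a \<noteq> b \<longrightarrow> a \<inter> b = {})"
    then show "\<exists>a\<in>\<A>. \<exists>b\<in>\<A>. a \<noteq> b \<and>
      (\<forall>i<2 * n. lex_less (elem_at lex_less a i) (elem_at lex_less b i) \<longleftrightarrow> \<tau> i = 0)"
      by (elim conjE) (rule disjoint_family_realizes_pattern)
  qed
qed

end
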